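(* Let $(k,R,t)\in\mathbb{R}^3$ with $R>0$ and $t\neq 0$, put $c=\frac{1-t^2}{1+t^2}$, $s=\frac{2t}{1+t^2}$, and let $$F_1^h=Y^2-(Xs-Yc)^2+2ZW-W^2,\qquad F_2^h=\bigl(X^2-2kZW+(R^2+k^2)W^2\bigr)^2-4R^2W^2(X^2+Y^2).$$ Let $T\subset\mathbb{P}^3$ be the projective closure of the trisector $\{F_1^h(x,y,z,1)=F_2^h(x,y,z,1)=0\}\subset\mathbb{R}^3$. Then $T$ meets the plane at infinity $\{W=0\}$ in the unique point $p_\infty=[0:0:1:0]$. In the affine chart $Z=1$, the first nonzero homogeneous term of a local defining equation of $T$ at $p_\infty$ is $E(X,Y)^2$, where $$E(X,Y)=X^2-2kQ(X,Y),\qquad Q(X,Y)=\tfrac12\bigl(s^2X^2-2scXY-s^2Y^2\bigr).$$ The discriminant of the quadratic form $E$ is $\Delta_Q=4ks^2(k-1)$. Hence the asymptotic direction pattern degenerates (i.e. $E$ fails to factor into two distinct linear forms) exactly when $\Delta_Q=0$, that is, at $k=0$ and $k=1$.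
   Context: $F_1^h,F_2^h$ are the homogenizations ($x=X/W$, $y=Y/W$, $z=Z/W$) of the $L_1$–$L_2$ bisector $y^2-(xs-yc)^2+2z-1$ and the polynomialized $L_1$–circle bisector $(x^2-2kz+R^2+k^2)^2-4R^2(x^2+y^2)$, for $L_1$ the $x$-axis, $L_2$ the line through $(0,0,1)$ with direction $(c,s,0)$, and the circle of radius $R$ centered at $(0,0,k)$ in the plane $z=k$. The projective closure is the zero set of the saturated ideal $(\langle F_1^h,F_2^h\rangle : W^\infty)$. In the chart $Z=1$ with $p_\infty$ at the origin of $(X,Y,W)$, the equation $F_1^h(X,Y,1,W)=0$ has a unique local analytic solution $W=\omega(X,Y)$ with $\omega(0,0)=0$ (implicit function theorem, since $\partial_W F_1^h=2$ there), and the local defining equation is $F_2^h(X,Y,1,\omega(X,Y))=0$. *)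

theory Defs
  imports "HOL-Analysis.Analysis" "HOL-Library.Landau_Symbols"
begin

type_synonym pt4 = "real \<times> real \<times> real \<times> real"

definition coordW :: "pt4 \<Rightarrow> real" where
  "coordW p = snd (snd (snd p))"

text \<open>Real polynomial functions in X,Y,Z,W (over the infinite field R these
  are the same as polynomials).\<close>
inductive_set poly_fun4 :: "(pt4 \<Rightarrow> real) set" where
  pconst: "(\<lambda>p. a) \<in> poly_fun4"
| pX: "(\<lambda>p. fst p) \<in> poly_fun4"
| pY: "(\<lambda>p. fst (snd p)) \<in> poly_fun4"
| pZ: "(\<lambda>p. fst (snd (snd p))) \<in> poly_fun4"
| pW: "(\<lambda>p. snd (snd (snd p))) \<in> poly_fun4"
| padd: "f \<in> poly_fun4 \<Longrightarrow> g \<in> poly_fun4 \<Longrightarrow> (\<lambda>p. f p + g p) \<in> poly_fun4"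
| pmult: "f \<in> poly_fun4 \<Longrightarrow> g \<in> poly_fun4 \<Longrightarrow> (\<lambda>p. f p * g p) \<in> poly_fun4"

definition ideal_gen2 :: "(pt4 \<Rightarrow> real) \<Rightarrow> (pt4 \<Rightarrow> real) \<Rightarrow> (pt4 \<Rightarrow> real) set" where
  "ideal_gen2 F G = {(\<lambda>p. A p * F p + B p * G p) | A B. A \<in> poly_fun4 \<and> B \<in> poly_fun4}"

definition saturation_W :: "(pt4 \<Rightarrow> real) set \<Rightarrow> (pt4 \<Rightarrow> real) set" where
  "saturation_W I = {H \<in> poly_fun4. \<exists>n::nat. (\<lambda>p. coordW p ^ n * H p) \<in> I}"

text \<open>Projective zero set, as the set of nonzero homogeneous coordinate vectors.\<close>
definition proj_zero_set :: "(pt4 \<Rightarrow> real) set \<Rightarrow> pt4 set" where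
  "proj_zero_set S = {p. p \<noteq> (0,0,0,0) \<and> (\<forall>H\<in>S. H p = 0)}"

definition F1h :: "real \<Rightarrow> real \<Rightarrow> pt4 \<Rightarrow> real" where
  "F1h s c = (\<lambda>(X,Y,Z,W). Y^2 - (X * s - Y * c)^2 + 2*Z*W - W^2)"

definition F2h :: "real \<Rightarrow> real \<Rightarrow> pt4 \<Rightarrow> real" where
  "F2h k R = (\<lambda>(X,Y,Z,W). (X^2 - 2*k*Z*W + (R^2+k^2)*W^2)^2 - 4*R^2*W^2*(X^2+Y^2))"

definition proj_closure :: "real \<Rightarrow> real \<Rightarrow> real \<Rightarrow> real \<Rightarrow> pt4 set" where
  "proj_closure k R s c = proj_zero_set (saturation_W (ideal_gen2 (F1h s c) (F2h k R)))"

definition Qform :: "real \<Rightarrow> real \<Rightarrow> real \<times> real \<Rightarrow> real" where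
  "Qform s c = (\<lambda>(X,Y). (s^2 * X^2 - 2 * s * c * X * Y - s^2 * Y^2) / 2)"

definition Eform :: "real \<Rightarrow> real \<Rightarrow> real \<Rightarrow> real \<times> real \<Rightarrow> real" where
  "Eform k s c = (\<lambda>(X,Y). X^2 - 2*k*Qform s c (X,Y))"

text \<open>Discriminant b^2 - 4ac of a binary quadratic form q = aX^2 + bXY + cY^2,
  with the coefficients read off from the values of q.\<close>
definition quad_disc :: "(real \<times> real \<Rightarrow> real) \<Rightarrow> real" where
  "quad_disc q = (let a = q (1,0); cc = q (0,1); b = q (1,1) - a - cc in b^2 - 4*a*cc)"

text \<open>q factors (over C) into two distinct (non-proportional) linear forms.\<close>
definition factors_distinct_linear :: "(real \<times> real \<Rightarrow> real) \<Rightarrow> bool" where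
  "factors_distinct_linear q \<longleftrightarrow>
     (\<exists>a b c d :: complex. (\<forall>x y. complex_of_real (q (x,y)) =
         (a * complex_of_real x + b * complex_of_real y) * (c * complex_of_real x + d * complex_of_real y))
       \<and> a * d - b * c \<noteq> 0)"

end

theory Submission
  imports Defs "HOL-Computational_Algebra.Polynomial"
begin

(* On W = 0, F2h reduces to X^4 and then F1h to s^2 Y^2, so p_inf = [0:0:1:0] is the only
   candidate point at infinity. It does lie on the closure because it is a limit of points of the
   complex affine curve with W <> 0 (for 0 < k < 1 there are no real ones): on the cone
   X = sigma p(mu), Y = sigma q(mu), W = sigma tau with p^2 + q^2 = mu^2 the square root in F2h
   becomes rational, and the curve turns into a plane curve in (mu, tau) whose points with tau -> 0
   and mu -> a root of E(p(mu), q(mu)) have sigma -> 0. An element H of the saturation satisfies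
   W^n H = A F1h + B F2h, a polynomial identity that persists over C, so H vanishes on these points
   and, by continuity, at p_inf.
   In the chart Z = 1, F1h = 0 reads W (2 - W) = 2 Q, so W = O(|v|^2), and
   F2h - E^2 = W^2 (2 C E + C^2 W^2 - 4 R^2 |v|^2) with C = R^2 + k^2 - k is O(|v|^6).
   The remaining claims are the classification of binary quadratic forms by their discriminant. *)

section \<open>Polynomial functions on real and complex 4-space\<close>

lemma poly_fun4_diff: "f \<in> poly_fun4 \<Longrightarrow> g \<in> poly_fun4 \<Longrightarrow> (\<lambda>p. f p - g p) \<in> poly_fun4"
  using poly_fun4.padd[OF _ poly_fun4.pmult[OF poly_fun4.pconst[of "-1"]]] by fastforce

lemma poly_fun4_power: "f \<in> poly_fun4 \<Longrightarrow> (\<lambda>p. f p ^ n) \<in> poly_fun4"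
  by (induction n) (auto intro: poly_fun4.intros)

lemmas poly_fun4_intros = poly_fun4.intros poly_fun4_diff poly_fun4_power

type_synonym cpt4 = "complex \<times> complex \<times> complex \<times> complex"

inductive_set cpoly_fun4 :: "(cpt4 \<Rightarrow> complex) set" where
  cconst: "(\<lambda>p. a) \<in> cpoly_fun4"
| cX: "(\<lambda>p. fst p) \<in> cpoly_fun4"
| cY: "(\<lambda>p. fst (snd p)) \<in> cpoly_fun4"
| cZ: "(\<lambda>p. fst (snd (snd p))) \<in> cpoly_fun4"
| cW: "(\<lambda>p. snd (snd (snd p))) \<in> cpoly_fun4"
| cadd: "f \<in> cpoly_fun4 \<Longrightarrow> g \<in> cpoly_fun4 \<Longrightarrow> (\<lambda>p. f p + g p) \<in> cpoly_fun4"
| cmult: "f \<in> cpoly_fun4 \<Longrightarrow> g \<in> cpoly_fun4 \<Longrightarrow> (\<lambda>p. f p * g p) \<in> cpoly_fun4"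

lemma cpoly_fun4_diff: "f \<in> cpoly_fun4 \<Longrightarrow> g \<in> cpoly_fun4 \<Longrightarrow> (\<lambda>p. f p - g p) \<in> cpoly_fun4"
  using cpoly_fun4.cadd[OF _ cpoly_fun4.cmult[OF cpoly_fun4.cconst[of "-1"]]] by fastforce

lemma cpoly_fun4_power: "f \<in> cpoly_fun4 \<Longrightarrow> (\<lambda>p. f p ^ n) \<in> cpoly_fun4"
  by (induction n) (auto intro: cpoly_fun4.intros)

lemmas cpoly_fun4_intros = cpoly_fun4.intros cpoly_fun4_diff cpoly_fun4_power

lemma continuous_on_cpoly_fun4: "g \<in> cpoly_fun4 \<Longrightarrow> continuous_on UNIV g"
  by (induction rule: cpoly_fun4.induct) (auto intro!: continuous_intros)

definition of_real4 :: "pt4 \<Rightarrow> cpt4" where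
  "of_real4 = (\<lambda>(x, y, z, w). (of_real x, of_real y, of_real z, of_real w))"

lemma poly_fun4_complexification:
  "f \<in> poly_fun4 \<Longrightarrow> \<exists>g\<in>cpoly_fun4. \<forall>p. g (of_real4 p) = of_real (f p)"
proof (induction rule: poly_fun4.induct)
  case (pconst a) show ?case by (intro bexI[of _ "\<lambda>p. of_real a"] cpoly_fun4.intros) auto
next
  case pX show ?case by (intro bexI[OF _ cpoly_fun4.cX]) (simp add: of_real4_def split: prod.split)
next
  case pY show ?case by (intro bexI[OF _ cpoly_fun4.cY]) (simp add: of_real4_def split: prod.split)
next
  case pZ show ?case by (intro bexI[OF _ cpoly_fun4.cZ]) (simp add: of_real4_def split: prod.split)
next
  case pW show ?case by (intro bexI[OF _ cpoly_fun4.cW]) (simp add: of_real4_def split: prod.split)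
next
  case (padd f g)
  then obtain f' g' where "f' \<in> cpoly_fun4" "g' \<in> cpoly_fun4"
    "\<forall>p. f' (of_real4 p) = of_real (f p)" "\<forall>p. g' (of_real4 p) = of_real (g p)" by blast
  then show ?case by (intro bexI[of _ "\<lambda>p. f' p + g' p"] cpoly_fun4.cadd) auto
next
  case (pmult f g)
  then obtain f' g' where "f' \<in> cpoly_fun4" "g' \<in> cpoly_fun4"
    "\<forall>p. f' (of_real4 p) = of_real (f p)" "\<forall>p. g' (of_real4 p) = of_real (g p)" by blast
  then show ?case by (intro bexI[of _ "\<lambda>p. f' p * g' p"] cpoly_fun4.cmult) auto
qed

definition line4 :: "cpt4 \<Rightarrow> cpt4 \<Rightarrow> complex \<Rightarrow> cpt4" where
  "line4 a v u = (fst a + u * fst v, fst (snd a) + u * fst (snd v),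
     fst (snd (snd a)) + u * fst (snd (snd v)), snd (snd (snd a)) + u * snd (snd (snd v)))"

lemma cpoly_fun4_on_line: "g \<in> cpoly_fun4 \<Longrightarrow> \<exists>P. \<forall>u. g (line4 a v u) = poly P u"
proof (induction rule: cpoly_fun4.induct)
  case (cconst c) show ?case by (intro exI[of _ "[:c:]"]) auto
next
  case cX show ?case by (intro exI[of _ "[:fst a, fst v:]"]) (auto simp: line4_def)
next
  case cY show ?case by (intro exI[of _ "[:fst (snd a), fst (snd v):]"]) (auto simp: line4_def)
next
  case cZ show ?case
    by (intro exI[of _ "[:fst (snd (snd a)), fst (snd (snd v)):]"]) (auto simp: line4_def)
next
  case cW show ?case
    by (intro exI[of _ "[:snd (snd (snd a)), snd (snd (snd v)):]"]) (auto simp: line4_def)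
next
  case (cadd f g)
  then obtain P Q where "\<forall>u. f (line4 a v u) = poly P u" "\<forall>u. g (line4 a v u) = poly Q u" by blast
  then show ?case by (intro exI[of _ "P + Q"]) auto
next
  case (cmult f g)
  then obtain P Q where "\<forall>u. f (line4 a v u) = poly P u" "\<forall>u. g (line4 a v u) = poly Q u" by blast
  then show ?case by (intro exI[of _ "P * Q"]) auto
qed

lemma poly_eq_0_if_real_roots:
  fixes P :: "'a :: {idom, real_algebra_1} poly"
  assumes "\<forall>x::real. poly P (of_real x) = 0"
  shows "poly P z = 0"
proof -
  have "range (of_real :: real \<Rightarrow> 'a) \<subseteq> {z. poly P z = 0}" using assms by auto
  moreover have "infinite (range (of_real :: real \<Rightarrow> 'a))"
    using finite_imageD[of of_real "UNIV :: real set"] infinite_UNIV_char_0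
    by (metis inj_on_def of_real_eq_iff)
  ultimately have "P = 0" using poly_roots_finite finite_subset by blast
  then show ?thesis by simp
qed

lemma cpoly_fun4_eq_0_on_line:
  assumes "g \<in> cpoly_fun4" "\<forall>x::real. g (line4 a v (of_real x)) = 0"
  shows "g (line4 a v u) = 0"
proof -
  obtain P where "\<forall>u. g (line4 a v u) = poly P u" using cpoly_fun4_on_line[OF assms(1)] by blast
  then show ?thesis using assms(2) poly_eq_0_if_real_roots[of P u] by auto
qed

text \<open>Vanishing on \<open>\<real>\<^sup>4\<close> propagates to \<open>\<complex>\<^sup>4\<close> one coordinate at a time.\<close>

lemma cpoly_fun4_eq_0_if_real_zero:
  assumes g: "g \<in> cpoly_fun4" and real_zero: "\<And>p. g (of_real4 p) = 0"
  shows "g z = 0"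
proof -
  have 0: "g (of_real x, of_real y, of_real z, of_real w) = 0" for x y z w
    using real_zero[of "(x, y, z, w)"] by (simp add: of_real4_def)
  have 1: "g (u, of_real y, of_real z, of_real w) = 0" for u y z w
    using cpoly_fun4_eq_0_on_line[OF g, of "(0, of_real y, of_real z, of_real w)" "(1, 0, 0, 0)" u] 0
    by (simp add: line4_def)
  have 2: "g (u1, u, of_real z, of_real w) = 0" for u1 u z w
    using cpoly_fun4_eq_0_on_line[OF g, of "(u1, 0, of_real z, of_real w)" "(0, 1, 0, 0)" u] 1
    by (simp add: line4_def)
  have 3: "g (u1, u2, u, of_real w) = 0" for u1 u2 u w
    using cpoly_fun4_eq_0_on_line[OF g, of "(u1, u2, 0, of_real w)" "(0, 0, 1, 0)" u] 2
    by (simp add: line4_def)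
  have "g (u1, u2, u3, u) = 0" for u1 u2 u3 u
    using cpoly_fun4_eq_0_on_line[OF g, of "(u1, u2, u3, 0)" "(0, 0, 0, 1)" u] 3
    by (simp add: line4_def)
  then show ?thesis by (cases z) auto
qed

section \<open>Complex points of the trisector tending to the point at infinity\<close>

definition F1c :: "complex \<Rightarrow> complex \<Rightarrow> cpt4 \<Rightarrow> complex" where
  "F1c S C = (\<lambda>(X, Y, Z, W). Y^2 - (X * S - Y * C)^2 + 2*Z*W - W^2)"

definition F2c :: "complex \<Rightarrow> complex \<Rightarrow> cpt4 \<Rightarrow> complex" where
  "F2c K R = (\<lambda>(X, Y, Z, W). (X^2 - 2*K*Z*W + (R^2+K^2)*W^2)^2 - 4*R^2*W^2*(X^2+Y^2))"

lemma F1h_poly_fun4: "F1h s c \<in> poly_fun4"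
  unfolding F1h_def case_prod_unfold by (intro poly_fun4_intros)

lemma F2h_poly_fun4: "F2h k R \<in> poly_fun4"
  unfolding F2h_def case_prod_unfold by (intro poly_fun4_intros)

lemma F1c_cpoly_fun4: "F1c S C \<in> cpoly_fun4"
  unfolding F1c_def case_prod_unfold by (intro cpoly_fun4_intros)

lemma F2c_cpoly_fun4: "F2c K R \<in> cpoly_fun4"
  unfolding F2c_def case_prod_unfold by (intro cpoly_fun4_intros)

lemma F1c_of_real4: "F1c (of_real s) (of_real c) (of_real4 p) = of_real (F1h s c p)"
  by (cases p) (simp add: F1c_def F1h_def of_real4_def)

lemma F2c_of_real4: "F2c (of_real k) (of_real R) (of_real4 p) = of_real (F2h k R p)"
  by (cases p) (simp add: F2c_def F2h_def of_real4_def)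

lemma F1c_scale: "F1c S C (a * x, a * y, a, a * w) = a^2 * F1c S C (x, y, 1, w)"
  unfolding F1c_def by (simp add: power2_eq_square algebra_simps)

lemma F2c_scale: "F2c K R (a * x, a * y, a, a * w) = a^4 * F2c K R (x, y, 1, w)"
  unfolding F2c_def by (simp add: power2_eq_square power4_eq_xxxx algebra_simps)

text \<open>A rational parametrization of the isotropic cone \<open>X\<^sup>2 + Y\<^sup>2 = \<mu>\<^sup>2\<close>. For \<open>S\<^sup>2 + C\<^sup>2 = 1\<close>,
  \<open>Gpar\<close> and \<open>Epar\<close> are the quadratic forms \<open>-2Q\<close> and \<open>E\<close> evaluated at \<open>(conic_x \<mu>, conic_y \<mu>)\<close>.\<close>

definition conic_x :: "complex \<Rightarrow> complex" where
  "conic_x \<mu> = (\<mu>^2 + 1) / 2"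

definition conic_y :: "complex \<Rightarrow> complex" where
  "conic_y \<mu> = - \<i> * (\<mu>^2 - 1) / 2"

definition Gpar :: "complex \<Rightarrow> complex \<Rightarrow> complex \<Rightarrow> complex" where
  "Gpar S C \<mu> = conic_y \<mu>^2 - (conic_x \<mu> * S - conic_y \<mu> * C)^2"

definition Epar :: "complex \<Rightarrow> complex \<Rightarrow> complex \<Rightarrow> complex \<Rightarrow> complex" where
  "Epar S C K \<mu> = conic_x \<mu>^2 + K * Gpar S C \<mu>"

lemma conic_x_sq_add_conic_y_sq: "conic_x \<mu>^2 + conic_y \<mu>^2 = \<mu>^2"
  unfolding conic_x_def conic_y_def by (simp add: power2_eq_square field_simps)

lemma Epar_eq:
  assumes "S^2 + C^2 = 1"
  shows "Epar S C K \<mu> =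
    ((1 - 2*K*S^2)/4 - \<i>*K*S*C/2) * \<mu>^4 + \<mu>^2/2 + ((1 - 2*K*S^2)/4 + \<i>*K*S*C/2)"
proof -
  have "Gpar S C \<mu> = (1 - C^2) * conic_y \<mu>^2 + 2*S*C * conic_x \<mu> * conic_y \<mu> - S^2 * conic_x \<mu>^2"
    unfolding Gpar_def by (simp add: power2_eq_square algebra_simps)
  also have "1 - C^2 = S^2" using assms by (simp add: algebra_simps)
  finally have G: "Gpar S C \<mu> = S^2 * conic_y \<mu>^2 + 2*S*C * conic_x \<mu> * conic_y \<mu> - S^2 * conic_x \<mu>^2" .
  show ?thesis unfolding Epar_def G unfolding conic_x_def conic_y_def
    by (simp add: power2_eq_square power4_eq_xxxx field_simps)
qed

lemma Gpar_neq_0_if_Epar_eq_0: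
  assumes "S \<noteq> 0" "S^2 + C^2 = 1" "Epar S C K \<mu> = 0"
  shows "Gpar S C \<mu> \<noteq> 0"
proof
  assume G: "Gpar S C \<mu> = 0"
  then have x: "conic_x \<mu> = 0" using assms(3) by (simp add: Epar_def)
  then have "\<mu>^2 = -1" unfolding conic_x_def by (simp add: eq_neg_iff_add_eq_0)
  then have "conic_y \<mu> = \<i>" unfolding conic_y_def by simp
  then have "Gpar S C \<mu> = C^2 - 1" unfolding Gpar_def x by (simp add: power_mult_distrib)
  also have "\<dots> = -(S^2)" using assms(2) by (simp add: algebra_simps)
  finally show False using G assms(1) by simp
qed

text \<open>At \<open>(\<sigma> conic_x \<mu>, \<sigma> conic_y \<mu>, 1, \<sigma>\<tau>)\<close> one has \<open>X\<^sup>2 + Y\<^sup>2 = (\<sigma>\<mu>)\<^sup>2\<close>, so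
  \<open>F2c = (P - 2RW\<sigma>\<mu>)(P + 2RW\<sigma>\<mu>)\<close>; the first hypothesis solves \<open>F1c = 0\<close> for \<open>\<sigma>\<close>, and the
  second one is the vanishing of the first factor.\<close>

lemma F1c_F2c_on_scaled_cone:
  assumes \<sigma>: "\<sigma> * (\<tau>^2 - Gpar S C \<mu>) = 2 * \<tau>"
    and plane: "Epar S C K \<mu> + (R^2 + K^2 - K) * \<tau>^2 - 2 * R * \<mu> * \<tau> = 0"
  shows "F1c S C (\<sigma> * conic_x \<mu>, \<sigma> * conic_y \<mu>, 1, \<sigma> * \<tau>) = 0"
    and "F2c K R (\<sigma> * conic_x \<mu>, \<sigma> * conic_y \<mu>, 1, \<sigma> * \<tau>) = 0"
proof -
  define p q G where "p = conic_x \<mu>" and "q = conic_y \<mu>" and "G = Gpar S C \<mu>"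
  have G: "G = q^2 - (p * S - q * C)^2" unfolding G_def p_def q_def Gpar_def ..
  have "F1c S C (\<sigma> * p, \<sigma> * q, 1, \<sigma> * \<tau>) = \<sigma> * (\<sigma> * G - \<sigma> * \<tau>^2 + 2 * \<tau>)"
    unfolding F1c_def G by (simp add: power2_eq_square algebra_simps)
  also have "\<sigma> * G - \<sigma> * \<tau>^2 + 2 * \<tau> = 0" using \<sigma> by (simp add: G_def algebra_simps)
  finally show "F1c S C (\<sigma> * conic_x \<mu>, \<sigma> * conic_y \<mu>, 1, \<sigma> * \<tau>) = 0" by (simp add: p_def q_def)
  have "2 * K * (\<sigma> * \<tau>) = K * \<sigma>^2 * (\<tau>^2 - G)"
    using \<sigma> by (simp add: G_def power2_eq_square algebra_simps flip: \<sigma>)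
  then have "(\<sigma>*p)^2 - 2*K*1*(\<sigma>*\<tau>) + (R^2+K^2)*(\<sigma>*\<tau>)^2
      = \<sigma>^2 * (Epar S C K \<mu> + (R^2 + K^2 - K) * \<tau>^2)"
    by (simp add: Epar_def p_def G_def power2_eq_square algebra_simps)
  also have "\<dots> = \<sigma>^2 * (2 * R * \<mu> * \<tau>)"
    using plane by (simp add: algebra_simps)
  also have "\<dots> = 2 * R * (\<sigma>*\<tau>) * (\<sigma>*\<mu>)" by (simp add: power2_eq_square)
  finally have P: "(\<sigma>*p)^2 - 2*K*1*(\<sigma>*\<tau>) + (R^2+K^2)*(\<sigma>*\<tau>)^2 = 2 * R * (\<sigma>*\<tau>) * (\<sigma>*\<mu>)" .
  have Q: "(\<sigma>*p)^2 + (\<sigma>*q)^2 = (\<sigma>*\<mu>)^2"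
    using conic_x_sq_add_conic_y_sq[of \<mu>] unfolding p_def q_def
    by (simp add: power_mult_distrib flip: distrib_left)
  have "F2c K R (\<sigma> * p, \<sigma> * q, 1, \<sigma> * \<tau>)
      = ((\<sigma>*p)^2 - 2*K*1*(\<sigma>*\<tau>) + (R^2+K^2)*(\<sigma>*\<tau>)^2)^2 - 4*R^2*(\<sigma>*\<tau>)^2*((\<sigma>*p)^2 + (\<sigma>*q)^2)"
    by (simp add: F2c_def)
  also have "\<dots> = (2 * R * (\<sigma>*\<tau>) * (\<sigma>*\<mu>))^2 - 4*R^2*(\<sigma>*\<tau>)^2*(\<sigma>*\<mu>)^2"
    by (simp only: P Q)
  also have "\<dots> = 0" by (simp add: power_mult_distrib)
  finally show "F2c K R (\<sigma> * conic_x \<mu>, \<sigma> * conic_y \<mu>, 1, \<sigma> * \<tau>) = 0"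
    by (simp add: p_def q_def)
qed

definition affine_points_tend_to_p_inf :: "complex \<Rightarrow> complex \<Rightarrow> complex \<Rightarrow> complex \<Rightarrow> bool" where
  "affine_points_tend_to_p_inf S C K R \<longleftrightarrow>
    (\<exists>X Y W :: nat \<Rightarrow> complex. X \<longlonglongrightarrow> 0 \<and> Y \<longlonglongrightarrow> 0 \<and> W \<longlonglongrightarrow> 0 \<and>
      (\<forall>\<^sub>F n in sequentially. F1c S C (X n, Y n, 1, W n) = 0 \<and> F2c K R (X n, Y n, 1, W n) = 0
         \<and> W n \<noteq> 0))"

lemma affine_points_tend_to_p_inf_if_plane_curve_points:
  fixes \<mu> \<tau> :: "nat \<Rightarrow> complex"
  assumes S: "S \<noteq> 0" "S^2 + C^2 = 1"
    and \<mu>: "\<mu> \<longlonglongrightarrow> \<mu>0" "Epar S C K \<mu>0 = 0" and \<tau>: "\<tau> \<longlonglongrightarrow> 0"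
    and plane: "\<forall>\<^sub>F n in sequentially.
      Epar S C K (\<mu> n) + (R^2 + K^2 - K) * \<tau> n^2 - 2 * R * \<mu> n * \<tau> n = 0 \<and> \<tau> n \<noteq> 0"
  shows "affine_points_tend_to_p_inf S C K R"
proof -
  define D where "D n = \<tau> n^2 - Gpar S C (\<mu> n)" for n
  define \<sigma> where "\<sigma> n = 2 * \<tau> n / D n" for n
  have G0: "Gpar S C \<mu>0 \<noteq> 0" by (rule Gpar_neq_0_if_Epar_eq_0[OF S \<mu>(2)])
  have D_lim: "D \<longlonglongrightarrow> 0^2 - Gpar S C \<mu>0"
    unfolding D_def Gpar_def conic_x_def conic_y_def by (intro tendsto_intros \<tau> \<mu>(1)) simp_all
  then have D0: "\<forall>\<^sub>F n in sequentially. D n \<noteq> 0"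
    by (rule tendsto_imp_eventually_ne) (use G0 in simp)
  have "\<sigma> \<longlonglongrightarrow> 2 * 0 / (0^2 - Gpar S C \<mu>0)"
    unfolding \<sigma>_def by (intro tendsto_intros \<tau> D_lim) (use G0 in simp)
  then have \<sigma>: "\<sigma> \<longlonglongrightarrow> 0" by simp
  have x: "(\<lambda>n. conic_x (\<mu> n)) \<longlonglongrightarrow> conic_x \<mu>0" and y: "(\<lambda>n. conic_y (\<mu> n)) \<longlonglongrightarrow> conic_y \<mu>0"
    unfolding conic_x_def conic_y_def by (intro tendsto_intros \<mu>(1); simp)+
  have "(\<lambda>n. \<sigma> n * conic_x (\<mu> n)) \<longlonglongrightarrow> 0" "(\<lambda>n. \<sigma> n * conic_y (\<mu> n)) \<longlonglongrightarrow> 0"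
    and "(\<lambda>n. \<sigma> n * \<tau> n) \<longlonglongrightarrow> 0"
    using tendsto_mult[OF \<sigma> x] tendsto_mult[OF \<sigma> y] tendsto_mult[OF \<sigma> \<tau>] by simp_all
  moreover have "\<forall>\<^sub>F n in sequentially.
      F1c S C (\<sigma> n * conic_x (\<mu> n), \<sigma> n * conic_y (\<mu> n), 1, \<sigma> n * \<tau> n) = 0 \<and>
      F2c K R (\<sigma> n * conic_x (\<mu> n), \<sigma> n * conic_y (\<mu> n), 1, \<sigma> n * \<tau> n) = 0 \<and> \<sigma> n * \<tau> n \<noteq> 0"
    using plane D0
  proof eventually_elim
    case (elim n)
    then have \<sigma>n: "\<sigma> n * (\<tau> n^2 - Gpar S C (\<mu> n)) = 2 * \<tau> n" "\<sigma> n \<noteq> 0"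
      unfolding \<sigma>_def D_def by auto
    with elim(1) show ?case using F1c_F2c_on_scaled_cone[OF \<sigma>n(1) conjunct1[OF elim(1)]] by simp
  qed
  ultimately show ?thesis unfolding affine_points_tend_to_p_inf_def by blast
qed

text \<open>The root of \<open>e + C\<^sub>0\<tau>\<^sup>2 - 2a\<tau> = 0\<close> near \<open>0\<close>, written as \<open>e / (a + r)\<close> with \<open>r\<^sup>2 = a\<^sup>2 - C\<^sub>0e\<close>; the
  sign of \<open>r\<close> is chosen so that \<open>|a + r| \<ge> |a|\<close>, which also covers \<open>C\<^sub>0 = 0\<close>.\<close>

lemma quadratic_small_root:
  fixes a e :: "nat \<Rightarrow> complex" and a0 C0 :: complex
  assumes a: "a \<longlonglongrightarrow> a0" "a0 \<noteq> 0" and e: "e \<longlonglongrightarrow> 0" "\<forall>\<^sub>F n in sequentially. e n \<noteq> 0"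
  shows "\<exists>\<tau>. \<tau> \<longlonglongrightarrow> 0 \<and> (\<forall>\<^sub>F n in sequentially. e n + C0 * \<tau> n^2 - 2 * a n * \<tau> n = 0 \<and> \<tau> n \<noteq> 0)"
proof -
  define r where "r n = csqrt (a n^2 - C0 * e n)" for n
  define d where "d n = a n + (if norm (a n + r n) \<ge> norm (a n - r n) then r n else - r n)" for n
  have d_sq: "(d n - a n)^2 = a n^2 - C0 * e n" for n unfolding d_def r_def by simp
  have d_ge: "norm (a n) \<le> norm (d n)" for n
  proof -
    have "2 * norm (a n) \<le> norm (a n + r n) + norm (a n - r n)"
      using norm_triangle_ineq[of "a n + r n" "a n - r n"] by simp
    then show ?thesis unfolding d_def by auto
  qed
  have "\<forall>\<^sub>F n in sequentially. norm a0 / 2 < norm (a n)"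
    using order_tendstoD(1)[OF tendsto_norm[OF a(1)], of "norm a0 / 2"] a(2) by simp
  then have d_big: "\<forall>\<^sub>F n in sequentially. norm a0 / 2 \<le> norm (d n)"
    by eventually_elim (use d_ge in \<open>meson less_le_trans less_imp_le\<close>)
  define \<tau> where "\<tau> n = e n / d n" for n
  have "\<tau> \<longlonglongrightarrow> 0"
  proof (rule Lim_null_comparison)
    show "\<forall>\<^sub>F n in sequentially. norm (\<tau> n) \<le> norm (e n) / (norm a0 / 2)"
      using d_big
    proof eventually_elim
      case (elim n)
      have "0 < norm a0 / 2" using a(2) by simp
      with elim have "0 < norm (d n)" by linarith
      have "norm (e n) / norm (d n) \<le> norm (e n) / (norm a0 / 2)"
        by (rule divide_left_mono[OF elim norm_ge_zero mult_pos_pos]) fact+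
      then show ?case by (simp add: \<tau>_def norm_divide)
    qed
    show "(\<lambda>n. norm (e n) / (norm a0 / 2)) \<longlonglongrightarrow> 0"
      using e(1) by (intro tendsto_divide_zero tendsto_norm_zero)
  qed
  moreover have "\<forall>\<^sub>F n in sequentially. e n + C0 * \<tau> n^2 - 2 * a n * \<tau> n = 0 \<and> \<tau> n \<noteq> 0"
    using d_big e(2)
  proof eventually_elim
    case (elim n)
    then have "d n \<noteq> 0" using a(2) by auto
    have "e n + C0 * \<tau> n^2 - 2 * a n * \<tau> n = e n / d n^2 * ((d n - a n)^2 - a n^2 + C0 * e n)"
      using \<open>d n \<noteq> 0\<close> unfolding \<tau>_def by (simp add: field_simps power2_eq_square)
    also have "\<dots> = 0" by (simp add: d_sq)
    finally show ?case using \<open>d n \<noteq> 0\<close> elim(2) by (simp add: \<tau>_def)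
  qed
  ultimately show ?thesis by blast
qed

lemma eventually_poly_neq_0_inj:
  fixes P :: "'a :: idom poly"
  assumes "P \<noteq> 0" "inj f"
  shows "\<forall>\<^sub>F n in sequentially. poly P (f n) \<noteq> 0"
proof -
  have "finite (f -` {z. poly P z = 0})"
    using finite_vimageI[OF poly_roots_finite[OF assms(1)] assms(2)] .
  then show ?thesis
    unfolding cofinite_eq_sequentially[symmetric] eventually_cofinite by (simp add: vimage_def)
qed

lemma affine_points_tend_to_p_inf_if_nonzero_root:
  assumes S: "S \<noteq> 0" "S^2 + C^2 = 1" and "R \<noteq> 0" and \<mu>0: "Epar S C K \<mu>0 = 0" "\<mu>0 \<noteq> 0"
  shows "affine_points_tend_to_p_inf S C K R"
proof -
  define \<mu> where "\<mu> n = \<mu>0 + 1 / of_nat n" for n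
  have \<mu>_lim: "\<mu> \<longlonglongrightarrow> \<mu>0"
    unfolding \<mu>_def using tendsto_add[OF tendsto_const lim_1_over_n] by simp
  obtain A B where "\<And>\<mu>. Epar S C K \<mu> = A * \<mu>^4 + \<mu>^2/2 + B"
    by (rule that, rule Epar_eq[OF S(2)])
  then have Epar_poly: "Epar S C K = poly [:B, 0, 1/2, 0, A:]"
    by (intro ext) (simp add: power2_eq_square power4_eq_xxxx algebra_simps)
  have "\<forall>\<^sub>F n in sequentially. poly [:B, 0, 1/2, 0, A:] (\<mu> n) \<noteq> 0"
    by (rule eventually_poly_neq_0_inj) (auto simp: \<mu>_def intro!: injI)
  then have e0: "\<forall>\<^sub>F n in sequentially. Epar S C K (\<mu> n) \<noteq> 0" unfolding Epar_poly .
  have "(\<lambda>n. Epar S C K (\<mu> n)) \<longlonglongrightarrow> Epar S C K \<mu>0"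
    unfolding Epar_def Gpar_def conic_x_def conic_y_def by (intro tendsto_intros \<mu>_lim) simp_all
  then have e_lim: "(\<lambda>n. Epar S C K (\<mu> n)) \<longlonglongrightarrow> 0" using \<mu>0(1) by simp
  have a_lim: "(\<lambda>n. R * \<mu> n) \<longlonglongrightarrow> R * \<mu>0" by (intro tendsto_intros \<mu>_lim)
  have "R * \<mu>0 \<noteq> 0" using \<open>R \<noteq> 0\<close> \<mu>0(2) by simp
  then obtain \<tau> where "\<tau> \<longlonglongrightarrow> 0" and "\<forall>\<^sub>F n in sequentially.
      Epar S C K (\<mu> n) + (R^2 + K^2 - K) * \<tau> n^2 - 2 * (R * \<mu> n) * \<tau> n = 0 \<and> \<tau> n \<noteq> 0"
    using quadratic_small_root[OF a_lim _ e_lim e0] by blast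
  then show ?thesis
    using affine_points_tend_to_p_inf_if_plane_curve_points[OF S \<mu>_lim \<mu>0(1)] by (simp add: mult.assoc)
qed

lemma affine_points_tend_to_p_inf_if_Epar_square:
  assumes S: "S \<noteq> 0" "S^2 + C^2 = 1" and E: "\<And>\<mu>. Epar S C K \<mu> = \<mu>^2 / 2"
  shows "affine_points_tend_to_p_inf S C K R"
proof -
  define C0 where "C0 = R^2 + K^2 - K"
  define \<kappa> where "\<kappa> = 2 * R + csqrt (4 * R^2 - 2 * C0)"
  have \<kappa>: "\<kappa>^2 / 2 - 2 * R * \<kappa> + C0 = 0"
  proof -
    define q where "q = csqrt (4 * R^2 - 2 * C0)"
    have "\<kappa>^2 / 2 - 2 * R * \<kappa> + C0 = (q^2 - (4 * R^2 - 2 * C0)) / 2"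
      unfolding \<kappa>_def q_def[symmetric] by (simp add: power2_eq_square field_simps)
    then show ?thesis by (simp add: q_def)
  qed
  define \<tau> :: "nat \<Rightarrow> complex" where "\<tau> n = 1 / of_nat n" for n
  have \<tau>: "\<tau> \<longlonglongrightarrow> 0" unfolding \<tau>_def by (rule lim_1_over_n)
  have \<kappa>\<tau>: "(\<lambda>n. \<kappa> * \<tau> n) \<longlonglongrightarrow> 0" using tendsto_mult_right_zero[OF \<tau>] by simp
  have "\<forall>\<^sub>F n in sequentially.
      Epar S C K (\<kappa> * \<tau> n) + C0 * \<tau> n^2 - 2 * R * (\<kappa> * \<tau> n) * \<tau> n = 0 \<and> \<tau> n \<noteq> 0"
    using eventually_gt_at_top[of 0]
  proof eventually_elim
    case (elim n)
    have "Epar S C K (\<kappa> * \<tau> n) + C0 * \<tau> n^2 - 2 * R * (\<kappa> * \<tau> n) * \<tau> n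
        = \<tau> n^2 * (\<kappa>^2 / 2 - 2 * R * \<kappa> + C0)"
      unfolding E by (simp add: power2_eq_square algebra_simps)
    with elim show ?case by (simp add: \<kappa> \<tau>_def)
  qed
  moreover have "Epar S C K 0 = 0" using E[of 0] by simp
  ultimately show ?thesis
    using affine_points_tend_to_p_inf_if_plane_curve_points[OF S \<kappa>\<tau> _ \<tau>] unfolding C0_def by blast
qed

lemma affine_points_tend_to_p_inf_trisector:
  fixes s c k R :: real
  assumes s: "s \<noteq> 0" "s^2 + c^2 = 1" and "R \<noteq> 0"
  shows "affine_points_tend_to_p_inf (of_real s) (of_real c) (of_real k) (of_real R)"
proof -
  define S C K where "S = complex_of_real s" and "C = complex_of_real c" and "K = complex_of_real k"
  have S: "S \<noteq> 0" "S^2 + C^2 = 1" unfolding S_def C_def using s by (simp_all flip: of_real_power of_real_add)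
  define A B where "A = (1 - 2*K*S^2)/4 - \<i>*K*S*C/2" and "B = (1 - 2*K*S^2)/4 + \<i>*K*S*C/2"
  have E: "Epar S C K \<mu> = A * \<mu>^4 + \<mu>^2/2 + B" for \<mu>
    unfolding A_def B_def using Epar_eq[OF S(2)] by simp
  have AB: "A = 0 \<longleftrightarrow> B = 0"
    unfolding A_def B_def S_def C_def K_def by (simp add: complex_eq_iff)
  show ?thesis
  proof (cases "A = 0")
    case True
    then show ?thesis
      using affine_points_tend_to_p_inf_if_Epar_square[OF S] AB E unfolding S_def C_def K_def by simp
  next
    case False
    define \<nu> where "\<nu> = (-1/2 + csqrt (1/4 - 4*A*B)) / (2*A)"
    have "A * \<nu>^2 + \<nu>/2 + B = (csqrt (1/4 - 4*A*B)^2 - (1/4 - 4*A*B)) / (4*A)"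
      unfolding \<nu>_def using False by (simp add: power2_eq_square field_simps)
    then have "A * \<nu>^2 + \<nu>/2 + B = 0" by simp
    moreover have "B \<noteq> 0" using False AB by simp
    moreover have "csqrt \<nu> ^ 4 = \<nu>^2"
      using power_mult[of "csqrt \<nu>" 2 2] by simp
    ultimately have "Epar S C K (csqrt \<nu>) = 0" "csqrt \<nu> \<noteq> 0" by (auto simp: E)
    moreover have "complex_of_real R \<noteq> 0" using \<open>R \<noteq> 0\<close> by simp
    ultimately show ?thesis
      using affine_points_tend_to_p_inf_if_nonzero_root[OF S] unfolding S_def C_def K_def by blast
  qed
qed

section \<open>The points at infinity of the projective closure\<close>

lemma generators_in_ideal_gen2: "F \<in> ideal_gen2 F G" "G \<in> ideal_gen2 F G"
  unfolding ideal_gen2_def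
  by (intro CollectI exI[of _ "\<lambda>p. 1"] exI[of _ "\<lambda>p. 0"] conjI poly_fun4.pconst; simp)
    (intro CollectI exI[of _ "\<lambda>p. 0"] exI[of _ "\<lambda>p. 1"] conjI poly_fun4.pconst; simp)

lemma ideal_gen2_subset_saturation_W:
  assumes "F \<in> poly_fun4" "G \<in> poly_fun4"
  shows "ideal_gen2 F G \<subseteq> saturation_W (ideal_gen2 F G)"
  unfolding saturation_W_def
proof safe
  fix H assume "H \<in> ideal_gen2 F G"
  then show "H \<in> poly_fun4" using assms unfolding ideal_gen2_def by (auto intro: poly_fun4_intros)
  show "\<exists>n. (\<lambda>p. coordW p ^ n * H p) \<in> ideal_gen2 F G"
    using \<open>H \<in> ideal_gen2 F G\<close> by (intro exI[of _ 0]) simp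
qed

text \<open>The identity \<open>W\<^sup>n H = A F1h + B F2h\<close> on \<open>\<real>\<^sup>4\<close> extends to \<open>\<complex>\<^sup>4\<close>.\<close>

lemma saturation_complexification:
  assumes "H \<in> saturation_W (ideal_gen2 (F1h s c) (F2h k R))"
  obtains g where "g \<in> cpoly_fun4" "\<And>p. g (of_real4 p) = of_real (H p)"
    and "\<And>q. F1c (of_real s) (of_real c) q = 0 \<Longrightarrow> F2c (of_real k) (of_real R) q = 0 \<Longrightarrow>
      snd (snd (snd q)) \<noteq> 0 \<Longrightarrow> g q = 0"
proof -
  from assms obtain n A B where "H \<in> poly_fun4" "A \<in> poly_fun4" "B \<in> poly_fun4"
    and identity: "\<And>p. coordW p ^ n * H p = A p * F1h s c p + B p * F2h k R p"
    unfolding saturation_W_def ideal_gen2_def by (auto dest: fun_cong)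
  then obtain g gA gB where g: "g \<in> cpoly_fun4" "\<And>p. g (of_real4 p) = of_real (H p)"
    and gA: "gA \<in> cpoly_fun4" "\<And>p. gA (of_real4 p) = of_real (A p)"
    and gB: "gB \<in> cpoly_fun4" "\<And>p. gB (of_real4 p) = of_real (B p)"
    using poly_fun4_complexification by meson
  define D where "D q = snd (snd (snd q)) ^ n * g q
    - (gA q * F1c (of_real s) (of_real c) q + gB q * F2c (of_real k) (of_real R) q)" for q
  have "D \<in> cpoly_fun4"
    unfolding D_def using g(1) gA(1) gB(1) by (intro cpoly_fun4_intros F1c_cpoly_fun4 F2c_cpoly_fun4)
  moreover have "D (of_real4 p) = 0" for p
  proof -
    have "snd (snd (snd (of_real4 p))) = of_real (coordW p)"
      by (simp add: of_real4_def coordW_def split: prod.split)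
    then have "D (of_real4 p) = of_real (coordW p ^ n * H p - (A p * F1h s c p + B p * F2h k R p))"
      unfolding D_def g(2) gA(2) gB(2) F1c_of_real4 F2c_of_real4 by simp
    then show ?thesis by (simp add: identity)
  qed
  ultimately have D_zero: "D q = 0" for q by (rule cpoly_fun4_eq_0_if_real_zero)
  show ?thesis
  proof (rule that[OF g])
    fix q assume "F1c (of_real s) (of_real c) q = 0" "F2c (of_real k) (of_real R) q = 0"
      and "snd (snd (snd q)) \<noteq> 0"
    with D_zero[of q] show "g q = 0" by (simp add: D_def)
  qed
qed

lemma saturation_vanishes_at_p_inf:
  fixes s c k R z :: real
  assumes "s \<noteq> 0" "s^2 + c^2 = 1" "R \<noteq> 0" "z \<noteq> 0"
    and H: "H \<in> saturation_W (ideal_gen2 (F1h s c) (F2h k R))"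
  shows "H (0, 0, z, 0) = 0"
proof -
  obtain g where g: "g \<in> cpoly_fun4" "\<And>p. g (of_real4 p) = of_real (H p)"
    and g_curve: "\<And>q. F1c (of_real s) (of_real c) q = 0 \<Longrightarrow> F2c (of_real k) (of_real R) q = 0 \<Longrightarrow>
      snd (snd (snd q)) \<noteq> 0 \<Longrightarrow> g q = 0"
    using saturation_complexification[OF H] by blast
  obtain X Y W where X: "X \<longlonglongrightarrow> 0" and Y: "Y \<longlonglongrightarrow> 0" and W: "W \<longlonglongrightarrow> 0"
    and curve: "\<forall>\<^sub>F n in sequentially. F1c (of_real s) (of_real c) (X n, Y n, 1, W n) = 0 \<and>
      F2c (of_real k) (of_real R) (X n, Y n, 1, W n) = 0 \<and> W n \<noteq> 0"
    using affine_points_tend_to_p_inf_trisector[OF assms(1-3), of k]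
    unfolding affine_points_tend_to_p_inf_def by blast
  define a where "a = complex_of_real z"
  define q where "q n = (a * X n, a * Y n, a, a * W n)" for n
  have "q \<longlonglongrightarrow> (a * 0, a * 0, a, a * 0)"
    unfolding q_def by (intro tendsto_intros X Y W)
  then have "(\<lambda>n. g (q n)) \<longlonglongrightarrow> g (0, 0, a, 0)"
    using continuous_on_tendsto_compose[OF continuous_on_cpoly_fun4[OF g(1)]] by simp
  moreover have "\<forall>\<^sub>F n in sequentially. g (q n) = 0"
    using curve
  proof eventually_elim
    case (elim n)
    then have "F1c (of_real s) (of_real c) (q n) = 0" "F2c (of_real k) (of_real R) (q n) = 0"
      unfolding q_def F1c_scale F2c_scale by simp_all
    moreover have "snd (snd (snd (q n))) \<noteq> 0" using elim \<open>z \<noteq> 0\<close> by (simp add: q_def a_def)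
    ultimately show ?case by (rule g_curve)
  qed
  then have "(\<lambda>n. g (q n)) \<longlonglongrightarrow> 0" by (rule tendsto_eventually)
  ultimately have "g (0, 0, a, 0) = 0" by (rule LIMSEQ_unique)
  then show ?thesis using g(2)[of "(0, 0, z, 0)"] by (simp add: of_real4_def a_def)
qed

lemma proj_closure_at_infinity:
  fixes s c k R :: real
  assumes "s \<noteq> 0" "s^2 + c^2 = 1" "R \<noteq> 0"
  shows "{p \<in> proj_closure k R s c. coordW p = 0} = {(0, 0, z, 0) | z. z \<noteq> 0}"
proof safe
  fix X Y Z W assume p: "(X, Y, Z, W) \<in> proj_closure k R s c" "coordW (X, Y, Z, W) = 0"
  have "F1h s c \<in> saturation_W (ideal_gen2 (F1h s c) (F2h k R))"
    and "F2h k R \<in> saturation_W (ideal_gen2 (F1h s c) (F2h k R))"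
    using ideal_gen2_subset_saturation_W[OF F1h_poly_fun4 F2h_poly_fun4] generators_in_ideal_gen2
    by blast+
  with p have "W = 0" "(X, Y, Z, W) \<noteq> (0, 0, 0, 0)" "F1h s c (X, Y, Z, W) = 0" "F2h k R (X, Y, Z, W) = 0"
    unfolding proj_closure_def proj_zero_set_def coordW_def by auto
  then have "X^4 = 0" and F1: "Y^2 - (X * s - Y * c)^2 = 0"
    by (auto simp: F1h_def F2h_def power2_eq_square power4_eq_xxxx)
  then have "X = 0" by simp
  with F1 have "s^2 * Y^2 = 0" using assms(2) by (simp add: power_mult_distrib algebra_simps flip: assms(2))
  with \<open>X = 0\<close> \<open>W = 0\<close> \<open>(X, Y, Z, W) \<noteq> (0, 0, 0, 0)\<close> show "\<exists>z. (X, Y, Z, W) = (0, 0, z, 0) \<and> z \<noteq> 0"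
    using assms(1) by simp
next
  fix z :: real assume "z \<noteq> 0"
  then show "(0, 0, z, 0) \<in> proj_closure k R s c" "coordW (0, 0, z, 0) = 0"
    using saturation_vanishes_at_p_inf[OF assms]
    unfolding proj_closure_def proj_zero_set_def coordW_def by auto
qed

section \<open>The local equation at the point at infinity\<close>

lemma F1h_chart:
  assumes "s^2 + c^2 = 1"
  shows "F1h s c (x, y, 1, w) = 2 * w - w^2 - 2 * Qform s c (x, y)"
proof -
  have "y^2 - (x * s - y * c)^2 = (1 - c^2) * y^2 - s^2 * x^2 + 2 * s * c * x * y"
    by (simp add: power2_eq_square algebra_simps)
  also have "1 - c^2 = s^2" using assms by simp
  finally have "y^2 - (x * s - y * c)^2 = - 2 * Qform s c (x, y)"
    by (simp add: Qform_def algebra_simps)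
  then show ?thesis by (simp add: F1h_def)
qed

lemma F2h_chart_sub_Eform_sq:
  fixes s c k R x y w :: real
  assumes "s^2 + c^2 = 1" "F1h s c (x, y, 1, w) = 0"
  defines "C0 \<equiv> R^2 + k^2 - k"
  shows "F2h k R (x, y, 1, w) - (Eform k s c (x, y))^2
    = w^2 * (2 * C0 * Eform k s c (x, y) + C0^2 * w^2 - 4 * R^2 * (x^2 + y^2))"
proof -
  have "2 * w = 2 * Qform s c (x, y) + w^2" using assms(2) unfolding F1h_chart[OF assms(1)] by simp
  then have inner: "x^2 - 2*k*1*w + (R^2 + k^2) * w^2 = Eform k s c (x, y) + C0 * w^2"
    unfolding Eform_def C0_def by (simp add: algebra_simps flip: mult.assoc)
  have "F2h k R (x, y, 1, w) = (x^2 - 2*k*1*w + (R^2 + k^2) * w^2)^2 - 4*R^2*w^2*(x^2 + y^2)"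
    by (simp add: F2h_def)
  also have "\<dots> = (Eform k s c (x, y) + C0 * w^2)^2 - 4*R^2*w^2*(x^2 + y^2)"
    by (simp only: inner)
  finally show ?thesis by (simp add: power2_eq_square algebra_simps)
qed

lemma abs_Qform_le:
  assumes "s^2 + c^2 = 1"
  shows "\<bar>Qform s c (x, y)\<bar> \<le> x^2 + y^2"
proof -
  have "s^2 \<le> 1" using assms by (metis le_add_same_cancel1 zero_le_power2)
  then have "s^2 * \<bar>x^2 - y^2\<bar> \<le> 1 * \<bar>x^2 - y^2\<bar>" by (intro mult_right_mono) simp_all
  also have "\<dots> \<le> x^2 + y^2" by (simp add: abs_le_iff)
  finally have sq: "\<bar>s^2 * (x^2 - y^2)\<bar> \<le> x^2 + y^2" by (simp add: abs_mult)
  have "2 * \<bar>s\<bar> * \<bar>c\<bar> \<le> 1"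
    using sum_squares_bound[of "\<bar>s\<bar>" "\<bar>c\<bar>"] assms by simp
  then have "\<bar>2 * s * c * x * y\<bar> \<le> 1 * (\<bar>x\<bar> * \<bar>y\<bar>)"
    unfolding abs_mult mult.assoc[symmetric] by (intro mult_right_mono) simp_all
  also have "\<dots> \<le> x^2 + y^2"
  proof -
    have "2 * (\<bar>x\<bar> * \<bar>y\<bar>) \<le> x^2 + y^2"
      using sum_squares_bound[of "\<bar>x\<bar>" "\<bar>y\<bar>"] by (simp add: mult.assoc)
    moreover have "0 \<le> \<bar>x\<bar> * \<bar>y\<bar>" by simp
    ultimately show ?thesis by linarith
  qed
  finally have "\<bar>s^2 * (x^2 - y^2) - 2 * s * c * x * y\<bar> \<le> 2 * (x^2 + y^2)"
    using sq abs_triangle_ineq4 by (smt (verit))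
  then show ?thesis by (simp add: Qform_def algebra_simps)
qed

lemma abs_Eform_le:
  assumes "s^2 + c^2 = 1"
  shows "\<bar>Eform k s c (x, y)\<bar> \<le> (1 + 2 * \<bar>k\<bar>) * (x^2 + y^2)"
proof -
  have "\<bar>Eform k s c (x, y)\<bar> \<le> x^2 + 2 * \<bar>k\<bar> * \<bar>Qform s c (x, y)\<bar>"
    unfolding Eform_def using abs_triangle_ineq4[of "x^2" "2 * k * Qform s c (x, y)"]
    by (simp add: abs_mult)
  also have "\<dots> \<le> (x^2 + y^2) + 2 * \<bar>k\<bar> * (x^2 + y^2)"
    using abs_Qform_le[OF assms] by (intro add_mono mult_left_mono) simp_all
  finally show ?thesis by (simp add: algebra_simps)
qed

lemma abs_chart_W_le:
  assumes "s^2 + c^2 = 1" "F1h s c (x, y, 1, w) = 0" "\<bar>w\<bar> < 1"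
  shows "\<bar>w\<bar> \<le> 2 * (x^2 + y^2)"
proof -
  have "\<bar>w\<bar> * 1 \<le> \<bar>w\<bar> * \<bar>2 - w\<bar>" using assms(3) by (intro mult_left_mono) auto
  also have "\<dots> = 2 * \<bar>Qform s c (x, y)\<bar>"
    using assms(2) unfolding F1h_chart[OF assms(1)]
    by (simp add: power2_eq_square algebra_simps flip: abs_mult)
  finally have "\<bar>w\<bar> \<le> 2 * \<bar>Qform s c (x, y)\<bar>" by simp
  with abs_Qform_le[OF assms(1), of x y] show ?thesis by (smt (verit))
qed

lemma abs_F2h_chart_sub_Eform_sq_le:
  fixes s c k R x y w :: real
  assumes sc: "s^2 + c^2 = 1" and F1: "F1h s c (x, y, 1, w) = 0"
    and "\<bar>w\<bar> < 1" and N_le: "x^2 + y^2 \<le> 1"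
  defines "C0 \<equiv> R^2 + k^2 - k"
  shows "\<bar>F2h k R (x, y, 1, w) - (Eform k s c (x, y))^2\<bar>
    \<le> 4 * (2 * \<bar>C0\<bar> * (1 + 2 * \<bar>k\<bar>) + 4 * C0^2 + 4 * R^2) * (x^2 + y^2)^3"
proof -
  define N where "N = x^2 + y^2"
  define E where "E = Eform k s c (x, y)"
  have "0 \<le> N" by (simp add: N_def)
  then have "N^2 \<le> N" using mult_right_mono[OF N_le] by (simp add: N_def power2_eq_square)
  have "\<bar>w\<bar> \<le> 2 * N" using abs_chart_W_le[OF sc F1 \<open>\<bar>w\<bar> < 1\<close>] by (simp add: N_def)
  then have w_sq: "w^2 \<le> 4 * N^2" using power_mono[of "\<bar>w\<bar>" "2 * N" 2] by (simp add: power_mult_distrib)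
  have "\<bar>2 * C0 * E + C0^2 * w^2 - 4 * R^2 * N\<bar> \<le> 2 * \<bar>C0\<bar> * \<bar>E\<bar> + C0^2 * w^2 + 4 * R^2 * N"
  proof -
    have "\<bar>2 * C0 * E\<bar> = 2 * \<bar>C0\<bar> * \<bar>E\<bar>" "\<bar>C0^2 * w^2\<bar> = C0^2 * w^2" "\<bar>4 * R^2 * N\<bar> = 4 * R^2 * N"
      using \<open>0 \<le> N\<close> by (simp_all add: abs_mult)
    then show ?thesis by (smt (verit))
  qed
  also have "\<dots> \<le> 2 * \<bar>C0\<bar> * ((1 + 2 * \<bar>k\<bar>) * N) + C0^2 * (4 * N) + 4 * R^2 * N"
    using abs_Eform_le[OF sc, of k x y] w_sq \<open>N^2 \<le> N\<close>
    by (intro add_mono mult_left_mono order_refl) (auto simp: E_def N_def)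
  finally have bracket: "\<bar>2 * C0 * E + C0^2 * w^2 - 4 * R^2 * N\<bar>
      \<le> (2 * \<bar>C0\<bar> * (1 + 2 * \<bar>k\<bar>) + 4 * C0^2 + 4 * R^2) * N"
    by (simp add: algebra_simps)
  have "\<bar>F2h k R (x, y, 1, w) - E^2\<bar> = w^2 * \<bar>2 * C0 * E + C0^2 * w^2 - 4 * R^2 * N\<bar>"
    unfolding F2h_chart_sub_Eform_sq[OF sc F1] E_def N_def C0_def by (simp add: abs_mult)
  also have "\<dots> \<le> (4 * N^2) * ((2 * \<bar>C0\<bar> * (1 + 2 * \<bar>k\<bar>) + 4 * C0^2 + 4 * R^2) * N)"
    using w_sq bracket by (intro mult_mono) simp_all
  finally show ?thesis by (simp add: E_def N_def power2_eq_square power3_eq_cube algebra_simps)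
qed

lemma F2h_chart_sub_Eform_sq_bigo:
  fixes \<omega> :: "real \<times> real \<Rightarrow> real"
  assumes sc: "s^2 + c^2 = 1" and "\<omega> (0, 0) = 0" "continuous (at (0, 0)) \<omega>"
    and chart: "\<forall>\<^sub>F v in nhds (0, 0). F1h s c (fst v, snd v, 1, \<omega> v) = 0"
  shows "(\<lambda>v. F2h k R (fst v, snd v, 1, \<omega> v) - (Eform k s c v)^2) \<in> O[at (0, 0)](\<lambda>v. norm v ^ 5)"
proof (rule bigoI)
  define M where "M = 4 * (2 * \<bar>R^2 + k^2 - k\<bar> * (1 + 2 * \<bar>k\<bar>) + 4 * (R^2 + k^2 - k)^2 + 4 * R^2)"
  have "(\<omega> \<longlongrightarrow> 0) (at (0, 0))" using assms(2,3) by (simp add: continuous_at)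
  then have "\<forall>\<^sub>F v in at (0, 0). \<bar>\<omega> v\<bar> < 1" by (auto dest: tendstoD[of _ _ _ 1])
  moreover have "\<forall>\<^sub>F v in at (0, 0). v \<in> ball (0, 0) 1 \<and> v \<in> UNIV"
    by (rule eventually_at_ball) simp
  then have "\<forall>\<^sub>F v in at (0, 0). norm v < 1"
    by eventually_elim (simp flip: zero_prod_def)
  moreover have "\<forall>\<^sub>F v in at (0, 0). F1h s c (fst v, snd v, 1, \<omega> v) = 0"
    using chart by (simp add: eventually_at_filter eventually_mono)
  ultimately show "\<forall>\<^sub>F v in at (0, 0).
      norm (F2h k R (fst v, snd v, 1, \<omega> v) - (Eform k s c v)^2) \<le> M * norm (norm v ^ 5)"
  proof eventually_elim
    case (elim v)
    obtain x y where v: "v = (x, y)" by (cases v)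
    have N: "x^2 + y^2 = norm v ^ 2" by (simp add: v norm_Pair)
    have "x^2 + y^2 \<le> 1" using elim(2) by (simp add: N power_le_one)
    from abs_F2h_chart_sub_Eform_sq_le[OF sc _ elim(1) this] elim(3)
    have "\<bar>F2h k R (x, y, 1, \<omega> v) - (Eform k s c (x, y))^2\<bar> \<le> M * (norm v ^ 2)^3"
      unfolding M_def N by (simp add: v)
    also have "\<dots> \<le> M * norm v ^ 5"
      using elim(2) by (intro mult_left_mono) (simp_all add: M_def power_decreasing flip: power_mult)
    finally show ?case by (simp add: v)
  qed
qed

section \<open>Binary quadratic forms\<close>

lemma quad_disc_eq:
  assumes "\<And>x y. q (x, y) = a * x^2 + b * x * y + d * y^2"
  shows "quad_disc q = b^2 - 4 * a * d"
  unfolding quad_disc_def Let_def assms by simp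

text \<open>For a factorization the discriminant is the square of the determinant of the two linear
  forms; conversely the quadratic formula produces a factorization.\<close>

lemma factors_distinct_linear_iff_quad_disc:
  fixes a b d :: real
  assumes q: "\<And>x y. q (x, y) = a * x^2 + b * x * y + d * y^2"
  shows "factors_distinct_linear q \<longleftrightarrow> quad_disc q \<noteq> 0"
  unfolding quad_disc_eq[OF q]
proof
  assume "factors_distinct_linear q"
  then obtain \<alpha> \<beta> \<gamma> \<delta> :: complex where
    f: "\<And>x y. complex_of_real (q (x, y)) = (\<alpha> * of_real x + \<beta> * of_real y) * (\<gamma> * of_real x + \<delta> * of_real y)"
    and det: "\<alpha> * \<delta> - \<beta> * \<gamma> \<noteq> 0"
    unfolding factors_distinct_linear_def by blast
  have a: "of_real a = \<alpha> * \<gamma>" and d: "of_real d = \<beta> * \<delta>" using f[of 1 0] f[of 0 1] q by simp_all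
  have "of_real (a + b + d) = (\<alpha> + \<beta>) * (\<gamma> + \<delta>)" using f[of 1 1] q by simp
  then have b: "of_real b = \<alpha> * \<delta> + \<beta> * \<gamma>" using a d by (simp add: algebra_simps)
  have "complex_of_real (b^2 - 4 * a * d) = (\<alpha> * \<delta> - \<beta> * \<gamma>)^2"
    using a b d by (simp add: power2_eq_square algebra_simps)
  with det show "b^2 - 4 * a * d \<noteq> 0" by (metis of_real_0 zero_eq_power2)
next
  assume D: "b^2 - 4 * a * d \<noteq> 0"
  show "factors_distinct_linear q"
  proof (cases "a = 0")
    case True
    then have "b \<noteq> 0" using D by simp
    then show ?thesis unfolding factors_distinct_linear_def
      by (intro exI[of _ 0] exI[of _ 1] exI[of _ "of_real b"] exI[of _ "of_real d"])
        (simp add: q True power2_eq_square algebra_simps)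
  next
    case False
    define A B D where "A = complex_of_real a" and "B = complex_of_real b" and "D = complex_of_real d"
    define r where "r = csqrt (B^2 - 4 * A * D)"
    define r1 r2 where "r1 = (- B + r) / (2 * A)" and "r2 = (- B - r) / (2 * A)"
    have disc: "B^2 - 4 * A * D = of_real (b^2 - 4 * a * d)" by (simp add: A_def B_def D_def)
    have "A \<noteq> 0" using False by (simp add: A_def)
    have "r \<noteq> 0" unfolding r_def disc csqrt_eq_0 of_real_eq_0_iff using D .
    have r_sq: "r^2 = B^2 - 4 * A * D" by (simp add: r_def)
    have sum: "A * (r1 + r2) = - B" using \<open>A \<noteq> 0\<close> by (simp add: r1_def r2_def field_simps)
    have "A * (r1 * r2) = (B^2 - r^2) / (4 * A)"
      using \<open>A \<noteq> 0\<close> by (simp add: r1_def r2_def field_simps power2_eq_square)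
    then have prod: "A * (r1 * r2) = D" using \<open>A \<noteq> 0\<close> by (simp add: r_sq field_simps)
    have "complex_of_real (q (x, y)) = (A * of_real x + (- A * r1) * of_real y) * (1 * of_real x + (- r2) * of_real y)"
      for x y
    proof -
      have "(A * of_real x + (- A * r1) * of_real y) * (1 * of_real x + (- r2) * of_real y)
          = A * of_real x ^2 - A * (r1 + r2) * of_real x * of_real y + A * (r1 * r2) * of_real y^2"
        by (simp add: power2_eq_square algebra_simps)
      then show ?thesis unfolding sum prod by (simp add: q A_def B_def D_def)
    qed
    moreover have "A * (- r2) - (- A * r1) * 1 = r"
      using \<open>A \<noteq> 0\<close> by (simp add: r1_def r2_def field_simps)
    ultimately show ?thesis unfolding factors_distinct_linear_def using \<open>r \<noteq> 0\<close> by metis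
  qed
qed

lemma Eform_eq: "Eform k s c (x, y) = (1 - k * s^2) * x^2 + (2 * k * s * c) * x * y + (k * s^2) * y^2"
  unfolding Eform_def Qform_def by (simp add: field_simps power2_eq_square)

lemma Eform_neq_0: "Eform k s c \<noteq> (\<lambda>_. 0)"
proof
  assume "Eform k s c = (\<lambda>_. 0)"
  then have "Eform k s c (1, 0) = 0" "Eform k s c (0, 1) = 0" by simp_all
  then show False by (simp add: Eform_eq)
qed

lemma quad_disc_Eform:
  assumes "s^2 + c^2 = 1"
  shows "quad_disc (Eform k s c) = 4 * k * s^2 * (k - 1)"
proof -
  have "quad_disc (Eform k s c) = 4 * k^2 * s^2 * (s^2 + c^2) - 4 * k * s^2"
    unfolding quad_disc_eq[OF Eform_eq] by (simp add: power2_eq_square algebra_simps)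
  then show ?thesis unfolding assms by (simp add: power2_eq_square algebra_simps)
qed

lemma unit_circle_rational_parametrization:
  fixes t :: real
  shows "((1 - t^2) / (1 + t^2))^2 + (2 * t / (1 + t^2))^2 = 1"
proof -
  have "(1 + t^2)^2 \<noteq> 0" by (simp add: add_pos_nonneg[THEN less_imp_neq, symmetric])
  moreover have "(1 - t^2)^2 + (2 * t)^2 = (1 + t^2)^2" by (simp add: power2_eq_square algebra_simps)
  ultimately show ?thesis by (simp add: power_divide flip: add_divide_distrib)
qed

theorem theorem4:
  fixes k R t c s :: real and \<omega> :: "real \<times> real \<Rightarrow> real"
  assumes "R > 0" and "t \<noteq> 0"
    and "c = (1 - t^2) / (1 + t^2)" and "s = 2 * t / (1 + t^2)"
    and "\<omega> (0,0) = 0" and "continuous (at (0,0)) \<omega>"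
    and "\<forall>\<^sub>F v in nhds (0,0). F1h s c (fst v, snd v, 1, \<omega> v) = 0"
  shows "{p \<in> proj_closure k R s c. coordW p = 0} = {(0, 0, z, 0) | z. z \<noteq> 0}
    \<and> (\<lambda>v. F2h k R (fst v, snd v, 1, \<omega> v) - (Eform k s c v)^2) \<in> O[at (0,0)](\<lambda>v. norm v ^ 5)
    \<and> Eform k s c \<noteq> (\<lambda>_. 0)
    \<and> quad_disc (Eform k s c) = 4 * k * s^2 * (k - 1)
    \<and> (\<not> factors_distinct_linear (Eform k s c) \<longleftrightarrow> quad_disc (Eform k s c) = 0)
    \<and> (quad_disc (Eform k s c) = 0 \<longleftrightarrow> k = 0 \<or> k = 1)"
proof -
  have sc: "s^2 + c^2 = 1"
    using unit_circle_rational_parametrization[of t] assms(3,4) by (simp add: add.commute)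
  have "s \<noteq> 0" using assms(2,4) by (simp add: add_pos_nonneg[THEN less_imp_neq, symmetric])
  have "R \<noteq> 0" using assms(1) by simp
  have "quad_disc (Eform k s c) = 0 \<longleftrightarrow> k = 0 \<or> k = 1"
    unfolding quad_disc_Eform[OF sc] using \<open>s \<noteq> 0\<close> by simp
  then show ?thesis
    using proj_closure_at_infinity[OF \<open>s \<noteq> 0\<close> sc \<open>R \<noteq> 0\<close>] F2h_chart_sub_Eform_sq_bigo[OF sc assms(5-7)]
      Eform_neq_0[of k s c] quad_disc_Eform[OF sc, of k]
      factors_distinct_linear_iff_quad_disc[OF Eform_eq[of k s c]] by blast
qed

end
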